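(* For all integers $n,d$ with $n\ge h$ and $0\le d\le\rho(m)-1$: \[ \sum_{i=0}^{\rho(m)-1}\mu_i\;\le\;\sum_{f=1}^h y(n-f)\;\le\;\rho(m)+\sum_{i=0}^{\rho(m)-1}\mu_i, \] and \[ \sum_{i=d+1}^{\rho(m)-1}\mu_i\;\le\;\sum_{f=1}^h w(n-f,d)\;\le\;\rho(m)-d-1+\sum_{i=0}^{\rho(m)-1}\mu_i . \]
   Context: For $u\in\mathbb{R}$ let $\mathbf 1[u]=1$ if $u\ge 0$ and $\mathbf 1[u]=0$ if $u<0$. Let $m$ be a positive integer and let $\rho(m)$ denote the number of primes $p$ with $2m<p<3m$; assume $\rho(m)\ge 2$. List these primes as $p_0>p_1>\dots>p_{\rho(m)-1}$ and put $\alpha_i=3m-p_i$. Let $k=(6m-1)\rho(m)$, $\mu_i=\lfloor k/p_i\rfloor$, $\beta_i=k-p_i\mu_i$. Define weights $\bar a_j$, $1\le j\le k$: if $\rho(m)$ is even, $\bar a_j=2$ if $j=\ell p_i$ for some $i$ and some $\ell$ with $1\le \ell\le 3\rho(m)/2$, $\bar a_j=-2$ if $j=\ell p_i$ with $3\rho(m)/2<\ell\le 2\rho(m)$, and $\bar a_j=0$ otherwise; if $\rho(m)$ is odd, $\bar a_j=2$ if $j=\ell p_i$ with $1\le\ell\le (3\rho(m)-1)/2$, $\bar a_j=-2$ if $j=\ell p_i$ with $(3\rho(m)+1)/2\le \ell\le 2\rho(m)-2$, $\bar a_j=-1$ if $j=\ell p_i$ with $\ell\in\{2\rho(m)-1,2\rho(m)\}$,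 and $\bar a_j=0$ otherwise (well defined since the sets $\{\ell p_i:1\le\ell\le2\rho(m)\}$ are pairwise disjoint). Let $\bar\theta=2\rho(m)$. For each $i$ define $x^{\alpha_i}(t)$ for $0\le t\le k-1$ by $x^{\alpha_i}(t)=1$ if $t=\beta_i+\ell p_i$ for some $0\le \ell\le\mu_i-1$ and $x^{\alpha_i}(t)=0$ otherwise, and for $t\ge k$ by $x^{\alpha_i}(t)=\mathbf 1\big[\sum_{j=1}^k \bar a_j x^{\alpha_i}(t-j)-\bar\theta\big]$. Let $h=\rho(m)k$. For $1\le f\le h$ let $b_f=\bar a_j$ if $f=\rho(m)j$ with $1\le j\le k$, and $b_f=0$ otherwise. Define $(y(n))_{n\ge0}$ by $y(\rho(m)j+i)=x^{\alpha_i}(1+j)$ for $0\le j\le k-1$, $0\le i\le\rho(m)-1$, and $y(n)=\mathbf 1\big[\sum_{f=1}^h b_f y(n-f)-\bar\theta\big]$ for $n\ge h$. Let $L_1(d)=\rho(m)\cdot\mathrm{lcm}(p_0,\dots,p_d)$ for $0\le d\le\rho(m)-1$. For $0\le d\le\rho(m)-1$ define $(w(n,d))_{n\ge0}$ by: for $0\le i\le d$, $w(\rho(m)j+i,d)=x^{\alpha_i}(1+j)$ for $0\le j\le k-2$ and $w(\rho(m)(k-1)+i,d)=1-x^{\alpha_i}(k)$; for $d+1\le i\le\rho(m)-1$ and $0\le j\le k-1$, $w(\rho(m)j+i,d)=y(\rho(m)j+i+L_1(d))$; and $w(n,d)=\mathbf 1\big[\sum_{f=1}^h b_f w(n-f,d)-\bar\theta\big]$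 for $n\ge h$. *)

theory Defs
  imports "HOL-Computational_Algebra.Primes"
begin

definition ind :: "int \<Rightarrow> int" where
  "ind u = (if u \<ge> 0 then 1 else 0)"

function thr :: "(nat \<Rightarrow> int) \<Rightarrow> nat \<Rightarrow> (nat \<Rightarrow> int) \<Rightarrow> int \<Rightarrow> nat \<Rightarrow> int" where
  "thr a K init \<theta> n =
     (if n < K then init n
      else ind ((\<Sum>f=1..K. a f * thr a K init \<theta> (n - f)) - \<theta>))"
  by pat_completeness auto
termination
  by (relation "measure (\<lambda>(a, K, init, \<theta>, n). n)") auto

definition primeset :: "nat \<Rightarrow> nat set" where
  "primeset m = {p. prime p \<and> 2 * m < p \<and> p < 3 * m}"

definition rho :: "nat \<Rightarrow> nat" where
  "rho m = card (primeset m)"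

definition pr :: "nat \<Rightarrow> nat \<Rightarrow> nat" where
  "pr m i = rev (sorted_list_of_set (primeset m)) ! i"

definition kk :: "nat \<Rightarrow> nat" where
  "kk m = (6 * m - 1) * rho m"

definition mu :: "nat \<Rightarrow> nat \<Rightarrow> nat" where
  "mu m i = kk m div pr m i"

definition beta :: "nat \<Rightarrow> nat \<Rightarrow> nat" where
  "beta m i = kk m - pr m i * mu m i"

definition mult_in :: "nat \<Rightarrow> nat \<Rightarrow> nat \<Rightarrow> nat \<Rightarrow> bool" where
  "mult_in m lo hi j = (\<exists>i<rho m. \<exists>l. lo \<le> l \<and> l \<le> hi \<and> j = l * pr m i)"

definition abar :: "nat \<Rightarrow> nat \<Rightarrow> int" where
  "abar m j =
    (if even (rho m) then
       (if mult_in m 1 (3 * rho m div 2) j then 2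
        else if mult_in m (3 * rho m div 2 + 1) (2 * rho m) j then -2
        else 0)
     else
       (if mult_in m 1 ((3 * rho m - 1) div 2) j then 2
        else if mult_in m ((3 * rho m + 1) div 2) (2 * rho m - 2) j then -2
        else if mult_in m (2 * rho m - 1) (2 * rho m) j then -1
        else 0))"

definition thetabar :: "nat \<Rightarrow> int" where
  "thetabar m = 2 * int (rho m)"

definition x_init :: "nat \<Rightarrow> nat \<Rightarrow> nat \<Rightarrow> int" where
  "x_init m i t = (if \<exists>l. l < mu m i \<and> t = beta m i + l * pr m i then 1 else 0)"

definition xa :: "nat \<Rightarrow> nat \<Rightarrow> nat \<Rightarrow> int" where
  "xa m i = thr (abar m) (kk m) (x_init m i) (thetabar m)"

definition hh :: "nat \<Rightarrow> nat" where
  "hh m = rho m * kk m"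

definition bb :: "nat \<Rightarrow> nat \<Rightarrow> int" where
  "bb m f = (if \<exists>j. 1 \<le> j \<and> j \<le> kk m \<and> f = rho m * j then abar m (f div rho m) else 0)"

definition y_init :: "nat \<Rightarrow> nat \<Rightarrow> int" where
  "y_init m n = xa m (n mod rho m) (1 + n div rho m)"

definition yy :: "nat \<Rightarrow> nat \<Rightarrow> int" where
  "yy m = thr (bb m) (hh m) (y_init m) (thetabar m)"

definition L1 :: "nat \<Rightarrow> nat \<Rightarrow> nat" where
  "L1 m d = rho m * Lcm (pr m ` {0..d})"

definition w_init :: "nat \<Rightarrow> nat \<Rightarrow> nat \<Rightarrow> int" where
  "w_init m d n =
    (let i = n mod rho m; j = n div rho m in
     if i \<le> d then
       (if j \<le> kk m - 2 then xa m i (1 + j) else 1 - xa m i (kk m))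
     else yy m (n + L1 m d))"

definition ww :: "nat \<Rightarrow> nat \<Rightarrow> nat \<Rightarrow> int" where
  "ww m d = thr (bb m) (hh m) (w_init m d) (thetabar m)"

end

theory Submission
  imports Defs "HOL-Number_Theory.Cong"
begin

(*
  Every sequence in the statement can be written down explicitly.
  For each prime p_i the indicator of the residue class  t = k (mod p_i)  solves the
  threshold recurrence with weights abar: at a time of the class the window of length k
  sees exactly the multiples l*p_i (l <= k div p_i), whose weights add up to 2*rho = theta;
  at any other time the window meets, for each prime p_j with j ~= i, at most one point
  l*p_j carrying a positive weight (at most 2), so the sum stays below theta.  The same
  argument shows that the truncated class indicator (which switches off after time k)
  solves the recurrence as well.  Since x^{alpha_i} has the initial values of the class
  indicator, the two coincide.  The recurrence with weights b only looks back by
  multiples of rho, so it decouples into rho interleaved copies of the abar-recurrence;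
  hence y and w are interleavings of (shifted or truncated) class indicators.  Finally a
  window of h = rho*k consecutive terms splits into one window of k terms per component,
  and a window of length k contains mu_i or mu_i + 1 points of a residue class mod p_i.
*)

subsection \<open>Threshold recurrences\<close>

definition solves :: "(nat \<Rightarrow> int) \<Rightarrow> nat \<Rightarrow> int \<Rightarrow> (nat \<Rightarrow> int) \<Rightarrow> bool" where
  "solves a K \<theta> s \<longleftrightarrow> (\<forall>t\<ge>K. s t = ind ((\<Sum>j=1..K. a j * s (t - j)) - \<theta>))"

lemma thr_solves: "solves a K \<theta> (thr a K init \<theta>)"
  unfolding solves_def by (auto simp del: thr.simps intro: trans[OF thr.simps])

lemma thr_initial: "t < K \<Longrightarrow> thr a K init \<theta> t = init t"
  by (subst thr.simps) simp

lemma solves_unique: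
  assumes "solves a K \<theta> s" and "solves a K \<theta> s'" and "\<forall>t<K. s t = s' t"
  shows "s t = s' t"
proof (induction t rule: less_induct)
  case (less t)
  show ?case
  proof (cases "t < K")
    case True
    then show ?thesis using assms(3) by auto
  next
    case False
    have "(\<Sum>j=1..K. a j * s (t - j)) = (\<Sum>j=1..K. a j * s' (t - j))"
      by (rule sum.cong) (use less False in auto)
    then show ?thesis using assms(1,2) False unfolding solves_def by auto
  qed
qed

lemma thr_eq_solution:
  assumes "solves a K \<theta> s" and "\<forall>t<K. init t = s t"
  shows "thr a K init \<theta> t = s t"
  by (rule solves_unique[OF thr_solves assms(1)]) (use assms(2) thr_initial in auto)

lemma solves_shift:
  assumes "solves a K \<theta> s"
  shows "solves a K \<theta> (\<lambda>t. s (t + c))"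
  unfolding solves_def
proof (intro allI impI)
  fix t assume t: "K \<le> t"
  have "(\<Sum>j=1..K. a j * s (t + c - j)) = (\<Sum>j=1..K. a j * s (t - j + c))"
    by (rule sum.cong) (use t in auto)
  then show "s (t + c) = ind ((\<Sum>j=1..K. a j * s (t - j + c)) - \<theta>)"
    using assms t unfolding solves_def by (metis trans_le_add1)
qed

subsection \<open>Counting in windows\<close>

lemma sum_over_multiples:
  fixes g :: "nat \<Rightarrow> int"
  assumes "0 < p" and "\<forall>j\<in>{1..K}. \<not> p dvd j \<longrightarrow> g j = 0"
  shows "(\<Sum>j=1..K. g j) = (\<Sum>l=1..K div p. g (l * p))"
proof -
  have "(\<Sum>j=1..K. g j) = (\<Sum>j\<in>{j\<in>{1..K}. p dvd j}. g j)"
    by (rule sum.mono_neutral_right) (use assms in auto)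
  also have "{j\<in>{1..K}. p dvd j} = (\<lambda>l. l * p) ` {1..K div p}"
  proof
    show "{j \<in> {1..K}. p dvd j} \<subseteq> (\<lambda>l. l * p) ` {1..K div p}"
    proof
      fix j assume "j \<in> {j \<in> {1..K}. p dvd j}"
      then obtain l where j: "j = l * p" "1 \<le> j" "j \<le> K"
        by (auto elim!: dvdE simp: mult.commute)
      then have "1 \<le> l" by (cases l) auto
      moreover have "l \<le> K div p" using j assms(1) by (simp add: less_eq_div_iff_mult_less_eq)
      ultimately show "j \<in> (\<lambda>l. l * p) ` {1..K div p}" using j by auto
    qed
    show "(\<lambda>l. l * p) ` {1..K div p} \<subseteq> {j \<in> {1..K}. p dvd j}"
      using assms(1) by (auto simp: less_eq_div_iff_mult_less_eq)
  qed
  also have "(\<Sum>j\<in>(\<lambda>l. l * p) ` {1..K div p}. g j) = (\<Sum>l=1..K div p. g (l * p))"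
    by (rule sum.reindex_cong[where l="\<lambda>l. l * p"]) (use assms(1) in \<open>auto simp: inj_on_def\<close>)
  finally show ?thesis .
qed

lemma multiple_in_range:
  fixes p l K :: nat
  assumes "0 < p" and "l \<in> {1..K div p}"
  shows "l * p \<in> {1..K}"
  using assms less_eq_div_iff_mult_less_eq[OF assms(1), of l K] by simp

lemma sum_drop_prefix:
  fixes g :: "nat \<Rightarrow> int"
  shows "(\<Sum>l=1..L. if c < l then g l else 0) = (\<Sum>l=1..L. g l) - (\<Sum>l=1..min c L. g l)"
  by (induction L) (auto simp: min_def)

lemma mod_eq_of_diff_mod_eq:
  fixes p :: nat
  assumes "j1 \<le> u" and "j2 \<le> u" and "(u - j1) mod p = (u - j2) mod p"
  shows "j1 mod p = j2 mod p"
proof (cases "j1 \<le> j2")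
  case True
  have "p dvd (u - j1) - (u - j2)" using assms True by (subst mod_eq_dvd_iff_nat[symmetric]) auto
  moreover have "(u - j1) - (u - j2) = j2 - j1" using assms True by simp
  ultimately show ?thesis using True by (metis mod_eq_dvd_iff_nat)
next
  case False
  have "p dvd (u - j2) - (u - j1)" using assms False by (subst mod_eq_dvd_iff_nat[symmetric]) auto
  moreover have "(u - j2) - (u - j1) = j1 - j2" using assms False by simp
  ultimately show ?thesis using False by (metis mod_eq_dvd_iff_nat nat_le_linear)
qed

lemma diff_mod_eq_iff_dvd:
  fixes p :: nat
  assumes "j \<le> u"
  shows "(u - j) mod p = u mod p \<longleftrightarrow> p dvd j"
proof -
  have "u mod p = (u - j) mod p \<longleftrightarrow> p dvd u - (u - j)" by (rule mod_eq_dvd_iff_nat) simp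
  moreover have "u - (u - j) = j" using assms by simp
  ultimately show ?thesis by auto
qed

lemma sum_lessThan_add:
  fixes g :: "nat \<Rightarrow> int"
  shows "(\<Sum>q<a + b. g q) = (\<Sum>q<a. g q) + (\<Sum>q<b. g (a + q))"
  by (induction b) auto

lemma sum_period_shift:
  fixes g :: "nat \<Rightarrow> int"
  assumes "\<forall>x. g (x + p) = g x"
  shows "(\<Sum>q<p. g (q + c)) = (\<Sum>q<p. g q)"
proof (induction c)
  case (Suc c)
  show ?case
  proof (cases p)
    case (Suc n)
    have "(\<Sum>q<p. g (q + Suc c)) = (\<Sum>q<n. g (Suc q + c)) + g (n + Suc c)"
      using Suc by simp
    moreover have "(\<Sum>q<p. g (q + c)) = g c + (\<Sum>q<n. g (Suc q + c))"
      using Suc by (simp add: sum.lessThan_Suc_shift del: sum.lessThan_Suc)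
    moreover have "g (n + Suc c) = g c" using assms Suc by (metis add.commute add_Suc_right)
    ultimately show ?thesis using Suc.IH by simp
  qed simp
qed simp

lemma residue_count_periods:
  assumes "0 < p" and "r < p"
  shows "(\<Sum>q<l * p. if (q + c) mod p = r then 1 else 0 :: int) = int l"
proof (induction l)
  case (Suc l)
  define g where "g q = (if q mod p = r then 1 else 0 :: int)" for q
  have "(\<Sum>q<p. g (q + (l * p + c))) = (\<Sum>q<p. g q)"
    by (rule sum_period_shift) (simp add: g_def)
  also have "(\<Sum>q<p. g q) = (\<Sum>q<p. if q = r then 1 else 0 :: int)"
    by (rule sum.cong) (auto simp: g_def)
  also have "\<dots> = 1" using assms by simp
  finally have one: "(\<Sum>q<p. g (l * p + q + c)) = 1" by (simp add: ac_simps)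
  have "(\<Sum>q<Suc l * p. g (q + c)) = (\<Sum>q<l * p. g (q + c)) + (\<Sum>q<p. g (l * p + q + c))"
    using sum_lessThan_add[of "\<lambda>q. g (q + c)" "l * p" p] by (simp add: add.commute add.left_commute)
  then show ?case using Suc.IH one by (simp add: g_def)
qed simp

lemma residue_count_window:
  fixes K c :: nat
  assumes "0 < p" and "r < p"
  defines "N \<equiv> (\<Sum>q<K. if (q + c) mod p = r then 1 else 0 :: int)"
  shows "int (K div p) \<le> N \<and> N \<le> int (K div p) + 1"
proof -
  define g where "g q = (if (q + c) mod p = r then 1 else 0 :: int)" for q
  have "N = (\<Sum>q<(K div p) * p. g q) + (\<Sum>q<K mod p. g ((K div p) * p + q))"
    unfolding N_def g_def by (subst div_mult_mod_eq[symmetric, of K p], rule sum_lessThan_add)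
  moreover have "(\<Sum>q<(K div p) * p. g q) = int (K div p)"
    unfolding g_def by (rule residue_count_periods[OF assms(1,2)])
  moreover have "0 \<le> (\<Sum>q<K mod p. g ((K div p) * p + q))"
    by (rule sum_nonneg) (auto simp: g_def)
  moreover have "(\<Sum>q<K mod p. g ((K div p) * p + q)) \<le> (\<Sum>q<p. g ((K div p) * p + q))"
    by (rule sum_mono2) (use assms in \<open>auto simp: g_def\<close>)
  moreover have "(\<Sum>q<p. g ((K div p) * p + q)) = 1"
    using residue_count_periods[OF assms(1,2), where l=1 and c="(K div p) * p + c"]
    by (simp add: g_def ac_simps)
  ultimately show ?thesis by linarith
qed

text \<open>A window of \<open>r*K\<close> consecutive terms is the union of \<open>K\<close>-term windows of the \<open>r\<close>
  interleaved subsequences; the phases are a rotation of \<open>0, \<dots>, r-1\<close>.\<close>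
lemma interleaved_window_sum:
  fixes G :: "nat \<Rightarrow> int"
  shows "(\<Sum>x<r * K. G (s + x))
       = (\<Sum>i<r. \<Sum>q<K. G (r * (q + (i + s) div r) + (i + s) mod r))"
proof -
  have "(\<Sum>x<r * K. G (s + x)) = (\<Sum>q<K. \<Sum>x\<in>{q * r..<q * r + r}. G (s + x))"
    using sum.nat_group[of "\<lambda>x. G (s + x)" r K] by (simp add: mult.commute)
  also have "\<dots> = (\<Sum>q<K. \<Sum>i<r. G (s + (q * r + i)))"
  proof (rule sum.cong)
    fix q
    have "(\<Sum>x\<in>{0 + q * r..<r + q * r}. G (s + x)) = (\<Sum>i\<in>{0..<r}. G (s + (i + q * r)))"
      by (rule sum.shift_bounds_nat_ivl)
    then show "(\<Sum>x\<in>{q * r..<q * r + r}. G (s + x)) = (\<Sum>i<r. G (s + (q * r + i)))"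
      by (simp add: atLeast0LessThan add.commute)
  qed simp
  also have "\<dots> = (\<Sum>i<r. \<Sum>q<K. G (s + (q * r + i)))" by (rule sum.swap)
  also have "\<dots> = (\<Sum>i<r. \<Sum>q<K. G (r * (q + (i + s) div r) + (i + s) mod r))"
  proof (intro sum.cong refl)
    fix i q
    have "s + (q * r + i) = r * (q + (i + s) div r) + (i + s) mod r"
      using div_mult_mod_eq[of "i + s" r] by (simp add: algebra_simps)
    then show "G (s + (q * r + i)) = G (r * (q + (i + s) div r) + (i + s) mod r)" by simp
  qed
  finally show ?thesis .
qed

lemma interleaved_window_bounds:
  fixes G :: "nat \<Rightarrow> int"
  assumes "0 < r"
    and "\<And>i c. i < r \<Longrightarrow> lo i \<le> (\<Sum>q<K. G (r * (q + c) + i))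
                        \<and> (\<Sum>q<K. G (r * (q + c) + i)) \<le> hi i"
  shows "(\<Sum>i<r. lo i) \<le> (\<Sum>x<r * K. G (s + x)) \<and> (\<Sum>x<r * K. G (s + x)) \<le> (\<Sum>i<r. hi i)"
proof -
  have rotate: "(\<Sum>i<r. f ((i + s) mod r)) = (\<Sum>i<r. f i)" for f :: "nat \<Rightarrow> int"
  proof -
    have "(\<Sum>i<r. f ((i + s) mod r)) = (\<Sum>i<r. f (i mod r))"
      by (rule sum_period_shift[where g="\<lambda>i. f (i mod r)"]) simp
    also have "\<dots> = (\<Sum>i<r. f i)" by (rule sum.cong) simp_all
    finally show ?thesis .
  qed
  have "(\<Sum>i<r. lo ((i + s) mod r)) \<le> (\<Sum>x<r * K. G (s + x))"
    unfolding interleaved_window_sum by (rule sum_mono) (use assms in auto)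
  moreover have "(\<Sum>x<r * K. G (s + x)) \<le> (\<Sum>i<r. hi ((i + s) mod r))"
    unfolding interleaved_window_sum by (rule sum_mono) (use assms in auto)
  ultimately show ?thesis unfolding rotate by simp
qed

lemma window_before:
  fixes G :: "nat \<Rightarrow> int"
  assumes "H \<le> n"
  shows "(\<Sum>f=1..H. G (n - f)) = (\<Sum>x<H. G (n - H + x))"
  by (rule sum.reindex_bij_witness[where i="\<lambda>x. H - x" and j="\<lambda>f. H - f"]) (use assms in auto)

subsection \<open>The primes and the weights\<close>

lemma primeset_finite: "finite (primeset m)"
  unfolding primeset_def by (rule finite_subset[of _ "{..<3 * m}"]) auto

text \<open>At most \<open>m - 1\<close> integers lie strictly between \<open>2m\<close> and \<open>3m\<close>.\<close>
lemma rho_le: "rho m \<le> m - 1"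
proof -
  have "primeset m \<subseteq> {2 * m<..<3 * m}" unfolding primeset_def by auto
  then have "rho m \<le> card {2 * m<..<3 * m}" unfolding rho_def by (rule card_mono[rotated]) simp
  then show ?thesis by simp
qed

lemma pr_in_primeset:
  assumes "i < rho m"
  shows "pr m i \<in> primeset m"
proof -
  have "set (rev (sorted_list_of_set (primeset m))) = primeset m" using primeset_finite by simp
  moreover have "i < length (rev (sorted_list_of_set (primeset m)))"
    using assms unfolding rho_def by simp
  ultimately show ?thesis unfolding pr_def by (metis nth_mem)
qed

text \<open>Every prime exceeds \<open>2*rho\<close>, the largest multiplier occurring in the weights.\<close>
lemma pr_props:
  assumes "i < rho m"
  shows "prime (pr m i)" and "2 * m < pr m i" and "pr m i < 3 * m" and "2 * rho m < pr m i"
proof -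
  show "prime (pr m i)" "2 * m < pr m i" "pr m i < 3 * m"
    using pr_in_primeset[OF assms] unfolding primeset_def by auto
  then show "2 * rho m < pr m i" using rho_le[of m] by linarith
qed

text \<open>Since the multipliers stay below every prime, \<open>l * p_i\<close> is a multiple \<open>l' * p_j\<close>
  with \<open>l' \<le> 2*rho\<close> only for \<open>j = i\<close> and \<open>l' = l\<close>.\<close>
lemma mult_in_pr:
  assumes "i < rho m" and "1 \<le> lo" and "hi \<le> 2 * rho m" and "1 \<le> l"
  shows "mult_in m lo hi (l * pr m i) \<longleftrightarrow> lo \<le> l \<and> l \<le> hi"
proof
  assume "mult_in m lo hi (l * pr m i)"
  then obtain i' l' where i': "i' < rho m" "lo \<le> l'" "l' \<le> hi" "l * pr m i = l' * pr m i'"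
    unfolding mult_in_def by blast
  note P = pr_props[OF assms(1)] and P' = pr_props[OF i'(1)]
  show "lo \<le> l \<and> l \<le> hi"
  proof (cases "pr m i' = pr m i")
    case True
    then show ?thesis using i' P(2) by simp
  next
    case False
    have "pr m i dvd l' * pr m i'" using i'(4) by (metis dvd_triv_right)
    moreover have "\<not> pr m i dvd pr m i'" using primes_dvd_imp_eq[OF P(1) P'(1)] False by auto
    moreover have "\<not> pr m i dvd l'"
    proof
      assume "pr m i dvd l'"
      then have "pr m i \<le> l'" using i' assms by (simp add: dvd_imp_le)
      then show False using i' assms P by linarith
    qed
    ultimately show ?thesis using P(1) by (simp add: prime_dvd_mult_iff)
  qed
qed (use assms in \<open>auto simp: mult_in_def\<close>)

lemma beta_eq_mod: "beta m i = kk m mod pr m i"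
  unfolding beta_def mu_def by (simp add: minus_mult_div_eq_mod)

text \<open>Every prime \<open>p_i\<close> has at least \<open>2*rho\<close> multiples in \<open>1..k\<close>, so a window of length \<open>k\<close> sees the whole profile.\<close>
lemma mu_ge:
  assumes "i < rho m"
  shows "2 * rho m \<le> mu m i"
proof -
  have "2 * rho m * pr m i \<le> 2 * rho m * (3 * m - 1)"
    using pr_props(3)[OF assms] by (intro mult_le_mono2) simp
  also have "\<dots> \<le> kk m" unfolding kk_def by (simp add: algebra_simps)
  finally have "2 * rho m * pr m i \<le> kk m" .
  moreover have "0 < pr m i" using pr_props(1)[OF assms] by (simp add: prime_gt_0_nat)
  ultimately show ?thesis unfolding mu_def by (simp add: less_eq_div_iff_mult_less_eq)
qed

text \<open>The weight profile along the multiples \<open>l * p_i\<close> of every prime.\<close>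
definition profile :: "nat \<Rightarrow> nat \<Rightarrow> int" where
  "profile r l = (if even r then
       (if 1 \<le> l \<and> l \<le> 3 * r div 2 then 2
        else if 3 * r div 2 + 1 \<le> l \<and> l \<le> 2 * r then -2 else 0)
     else
       (if 1 \<le> l \<and> l \<le> (3 * r - 1) div 2 then 2
        else if (3 * r + 1) div 2 \<le> l \<and> l \<le> 2 * r - 2 then -2
        else if 2 * r - 1 \<le> l \<and> l \<le> 2 * r then -1
        else 0))"

lemma abar_multiple:
  assumes "i < rho m" and "1 \<le> l"
  shows "abar m (l * pr m i) = profile (rho m) l"
proof -
  have r: "1 \<le> rho m" using assms by simp
  have mult: "mult_in m lo hi (l * pr m i) \<longleftrightarrow> lo \<le> l \<and> l \<le> hi"
    if "1 \<le> lo" "hi \<le> 2 * rho m" for lo hi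
    using mult_in_pr[OF assms(1) that assms(2)] .
  have ranges: "mult_in m 1 (3 * rho m div 2) (l * pr m i) \<longleftrightarrow> 1 \<le> l \<and> l \<le> 3 * rho m div 2"
    "mult_in m (3 * rho m div 2 + 1) (2 * rho m) (l * pr m i)
       \<longleftrightarrow> 3 * rho m div 2 + 1 \<le> l \<and> l \<le> 2 * rho m"
    "mult_in m 1 ((3 * rho m - 1) div 2) (l * pr m i) \<longleftrightarrow> 1 \<le> l \<and> l \<le> (3 * rho m - 1) div 2"
    "mult_in m ((3 * rho m + 1) div 2) (2 * rho m - 2) (l * pr m i)
       \<longleftrightarrow> (3 * rho m + 1) div 2 \<le> l \<and> l \<le> 2 * rho m - 2"
    "mult_in m (2 * rho m - 1) (2 * rho m) (l * pr m i) \<longleftrightarrow> 2 * rho m - 1 \<le> l \<and> l \<le> 2 * rho m"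
    by (rule mult; use r in simp)+
  show ?thesis unfolding abar_def profile_def ranges by simp
qed

lemma profile_prefix:
  assumes "2 \<le> r"
  shows "(\<Sum>l=1..L. profile r l) =
    (if even r then 2 * int (min L (3 * r div 2)) - 2 * (int (min L (2 * r)) - int (min L (3 * r div 2)))
     else 2 * int (min L ((3 * r - 1) div 2))
          - 2 * (int (min L (2 * r - 2)) - int (min L ((3 * r - 1) div 2)))
          - (int (min L (2 * r)) - int (min L (2 * r - 2))))"
proof (cases "even r")
  case True
  then obtain t where t: "r = 2 * t" by blast
  have pr: "profile r l = (if 1 \<le> l \<and> l \<le> 3 * t then 2
      else if 3 * t + 1 \<le> l \<and> l \<le> 4 * t then -2 else 0)" for l
    unfolding profile_def t by simp
  have "(\<Sum>l=1..L. profile r l) = 2 * int (min L (3 * t)) - 2 * (int (min L (4 * t)) - int (min L (3 * t)))"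
    by (induction L) (auto simp: pr min_def)
  then show ?thesis using True t by simp
next
  case False
  then obtain t where t: "r = 2 * t + 1" using oddE by blast
  have "1 \<le> t" using assms t by simp
  have pr: "profile r l = (if 1 \<le> l \<and> l \<le> 3 * t + 1 then 2
      else if 3 * t + 2 \<le> l \<and> l \<le> 4 * t then -2
      else if 4 * t + 1 \<le> l \<and> l \<le> 4 * t + 2 then -1 else 0)" for l
    unfolding profile_def t by simp
  have "(\<Sum>l=1..L. profile r l) = 2 * int (min L (3 * t + 1))
      - 2 * (int (min L (4 * t)) - int (min L (3 * t + 1))) - (int (min L (4 * t + 2)) - int (min L (4 * t)))"
    by (induction L) (use \<open>1 \<le> t\<close> in \<open>auto simp: pr min_def\<close>)
  moreover have "(3 * r - 1) div 2 = 3 * t + 1" "2 * r - 2 = 4 * t" "2 * r = 4 * t + 2" using t by auto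
  ultimately show ?thesis using False by simp
qed

text \<open>The full profile has weight exactly \<open>2*r\<close>, the threshold \<open>theta\<close>.\<close>
lemma profile_total:
  assumes "2 \<le> r" and "2 * r \<le> L"
  shows "(\<Sum>l=1..L. profile r l) = 2 * int r"
proof (cases "even r")
  case False
  then obtain t where t: "r = 2 * t + 1" using oddE by blast
  then have "(3 * r - 1) div 2 = 3 * t + 1" "2 * r - 2 = 4 * t" "2 * r = 4 * t + 2" by auto
  then show ?thesis using False t profile_prefix[OF assms(1), of L] assms by (auto simp: min_def)
qed (use profile_prefix[OF assms(1), of L] assms in \<open>auto simp: min_def\<close>)

lemma profile_prefix_pos:
  assumes "2 \<le> r" and "1 \<le> L"
  shows "0 < (\<Sum>l=1..L. profile r l)"
  using profile_prefix[OF assms(1), of L] assms by (auto simp: min_def)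

lemma abar_le_2: "abar m j \<le> 2"
  unfolding abar_def by simp

lemma abar_pos_multiple:
  assumes "0 < abar m j"
  shows "\<exists>i'<rho m. \<exists>l. 1 \<le> l \<and> l \<le> 2 * rho m \<and> j = l * pr m i'"
proof -
  have "mult_in m 1 (3 * rho m div 2) j \<or> mult_in m 1 ((3 * rho m - 1) div 2) j"
    using assms unfolding abar_def by (auto split: if_splits)
  then show ?thesis unfolding mult_in_def by fastforce
qed

subsection \<open>Decoupling of the recurrence with weights \<open>b\<close>\<close>

text \<open>Since \<open>b\<close> vanishes off the multiples of \<open>rho\<close>, the subsequence of indices
  \<open>= i (mod rho)\<close> of any solution solves the recurrence with weights \<open>abar\<close>.\<close>
lemma interleaved_solves:
  assumes "i < rho m"
  shows "solves (abar m) (kk m) (thetabar m) (\<lambda>j. thr (bb m) (hh m) init (thetabar m) (rho m * j + i))"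
  unfolding solves_def
proof (intro allI impI)
  fix t assume t: "kk m \<le> t"
  define Y where "Y = thr (bb m) (hh m) init (thetabar m)"
  define r where "r = rho m"
  have r: "0 < r" using assms unfolding r_def by simp
  have "hh m \<le> r * t + i" unfolding hh_def r_def using t by (simp add: trans_le_add1)
  then have "Y (r * t + i) = ind ((\<Sum>f=1..hh m. bb m f * Y (r * t + i - f)) - thetabar m)"
    using thr_solves[of "bb m" "hh m" "thetabar m" init] unfolding solves_def Y_def by blast
  moreover have "(\<Sum>f=1..hh m. bb m f * Y (r * t + i - f)) = (\<Sum>l=1..kk m. abar m l * Y (r * (t - l) + i))"
  proof -
    have "(\<Sum>f=1..hh m. bb m f * Y (r * t + i - f)) = (\<Sum>l=1..hh m div r. bb m (l * r) * Y (r * t + i - l * r))"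
      by (rule sum_over_multiples) (use r in \<open>auto simp: bb_def r_def\<close>)
    also have "hh m div r = kk m" unfolding hh_def r_def using r r_def by simp
    also have "(\<Sum>l=1..kk m. bb m (l * r) * Y (r * t + i - l * r)) = (\<Sum>l=1..kk m. abar m l * Y (r * (t - l) + i))"
    proof (rule sum.cong)
      fix l assume l: "l \<in> {1..kk m}"
      have "bb m (l * r) = abar m l" unfolding bb_def r_def using l r r_def by (auto simp: mult.commute)
      moreover have "r * t + i - l * r = r * (t - l) + i" using l t by (simp add: diff_mult_distrib2 mult.commute)
      ultimately show "bb m (l * r) * Y (r * t + i - l * r) = abar m l * Y (r * (t - l) + i)" by simp
    qed simp
    finally show ?thesis .
  qed
  ultimately show "Y (r * t + i) = ind ((\<Sum>j=1..kk m. abar m j * Y (r * (t - j) + i)) - thetabar m)"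
    by simp
qed

lemma interleaved_component:
  assumes "i < rho m" and "solves (abar m) (kk m) (thetabar m) s"
    and "\<And>t. t < kk m \<Longrightarrow> init (rho m * t + i) = s t"
  shows "thr (bb m) (hh m) init (thetabar m) (rho m * j + i) = s j"
proof (rule solves_unique[OF interleaved_solves[OF assms(1)] assms(2)], intro allI impI)
  fix t assume t: "t < kk m"
  have "rho m * t + i < rho m * (t + 1)" using assms(1) by simp
  also have "\<dots> \<le> hh m" unfolding hh_def using t by (intro mult_le_mono2) simp
  finally show "thr (bb m) (hh m) init (thetabar m) (rho m * t + i) = s t"
    using thr_initial assms(3)[OF t] by metis
qed

subsection \<open>Window sums of the recurrence with weights \<open>abar\<close>\<close>

text \<open>At most \<open>rho - 1\<close> positions with positive weight can lie in one residue class
  modulo \<open>p_i\<close> avoiding its multiples: such a position is \<open>l * p_j\<close> with \<open>j \<noteq> i\<close> and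
  \<open>l < p_i\<close>, and two of them with the same \<open>j\<close> would have the same \<open>l\<close>.\<close>
lemma few_positive_weights:
  assumes "i < rho m"
    and "\<forall>j\<in>S. 0 < abar m j \<and> \<not> pr m i dvd j"
    and "\<forall>j1\<in>S. \<forall>j2\<in>S. j1 mod pr m i = j2 mod pr m i"
  shows "card S \<le> rho m - 1"
proof -
  define p where "p = pr m i"
  note P = pr_props[OF assms(1), folded p_def]
  have "\<forall>j\<in>S. \<exists>i'. i' < rho m \<and> (\<exists>l. 1 \<le> l \<and> l \<le> 2 * rho m \<and> j = l * pr m i')"
    using abar_pos_multiple assms(2) by blast
  then obtain g L where gL: "\<And>j. j \<in> S \<Longrightarrow> g j < rho m \<and> 1 \<le> L j \<and> L j \<le> 2 * rho m \<and> j = L j * pr m (g j)"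
    by metis
  have other_prime: "pr m (g j) \<noteq> p" if "j \<in> S" for j
  proof
    assume "pr m (g j) = p"
    then have "p dvd j" using gL[OF that] by (metis dvd_triv_right)
    then show False using assms(2) that unfolding p_def by blast
  qed
  have "inj_on g S"
  proof (rule inj_onI)
    fix j1 j2 assume j: "j1 \<in> S" "j2 \<in> S" "g j1 = g j2"
    define q where "q = pr m (g j1)"
    have q: "prime q" "q \<noteq> p"
      using pr_props(1)[of "g j1" m] gL[OF j(1)] other_prime[OF j(1)] unfolding q_def by auto
    have e: "j1 = L j1 * q" "j2 = L j2 * q" using gL[OF j(1)] gL[OF j(2)] j(3) unfolding q_def by auto
    have "j1 mod p = j2 mod p" using assms(3) j(1,2) unfolding p_def by blast
    then have "[L j1 * q = L j2 * q] (mod p)" using e unfolding cong_def by simp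
    moreover have "coprime q p" using q P(1) by (simp add: primes_coprime)
    ultimately have "[L j1 = L j2] (mod p)" by (simp add: cong_mult_rcancel_nat)
    moreover have "L j1 < p" "L j2 < p" using gL[OF j(1)] gL[OF j(2)] P(4) by linarith+
    ultimately have "L j1 = L j2" by (simp add: cong_less_imp_eq_nat)
    then show "j1 = j2" using e by simp
  qed
  moreover have "g ` S \<subseteq> {..<rho m} - {i}"
    using gL other_prime unfolding p_def by blast
  then have "card (g ` S) \<le> card ({..<rho m} - {i})" by (rule card_mono[rotated]) simp
  ultimately show ?thesis using assms(1) by (simp add: card_image)
qed

lemma off_class_below_threshold:
  assumes "i < rho m" and "u mod pr m i \<noteq> kk m mod pr m i" and "kk m \<le> u"
    and "\<forall>j\<in>{1..kk m}. 0 \<le> v j \<and> v j \<le> 1"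
    and "\<forall>j\<in>{1..kk m}. v j \<noteq> 0 \<longrightarrow> (u - j) mod pr m i = kk m mod pr m i"
  shows "(\<Sum>j=1..kk m. abar m j * v j) < thetabar m"
proof -
  define S where "S = {j\<in>{1..kk m}. v j \<noteq> 0 \<and> 0 < abar m j}"
  have "(\<Sum>j=1..kk m. abar m j * v j) \<le> (\<Sum>j=1..kk m. if j \<in> S then 2 else 0)"
  proof (rule sum_mono)
    fix j assume j: "j \<in> {1..kk m}"
    show "abar m j * v j \<le> (if j \<in> S then 2 else 0)"
    proof (cases "j \<in> S")
      case True
      then have "abar m j * v j \<le> 2 * 1"
        using assms(4) j abar_le_2[of m j] by (intro mult_mono) (auto simp: S_def)
      then show ?thesis using True by simp
    next
      case False
      then have "v j = 0 \<or> abar m j \<le> 0" using j by (auto simp: S_def)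
      then show ?thesis using False assms(4) j by (auto simp: mult_nonpos_nonneg)
    qed
  qed
  also have "\<dots> = (\<Sum>j\<in>{1..kk m} \<inter> S. 2)" by (rule sum.inter_restrict[symmetric]) simp
  also have "{1..kk m} \<inter> S = S" unfolding S_def by auto
  also have "(\<Sum>j\<in>S. (2::int)) = 2 * int (card S)" by simp
  finally have le: "(\<Sum>j=1..kk m. abar m j * v j) \<le> 2 * int (card S)" .
  have "card S \<le> rho m - 1"
  proof (rule few_positive_weights[OF assms(1)])
    show "\<forall>j\<in>S. 0 < abar m j \<and> \<not> pr m i dvd j"
    proof
      fix j assume j: "j \<in> S"
      then have "j \<le> u" "(u - j) mod pr m i = kk m mod pr m i"
        using assms(3,5) unfolding S_def by auto
      then show "0 < abar m j \<and> \<not> pr m i dvd j"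
        using j assms(2) diff_mod_eq_iff_dvd[of j u "pr m i"] unfolding S_def by auto
    qed
    show "\<forall>j1\<in>S. \<forall>j2\<in>S. j1 mod pr m i = j2 mod pr m i"
    proof (intro ballI)
      fix j1 j2 assume "j1 \<in> S" "j2 \<in> S"
      then have "j1 \<le> u" "j2 \<le> u" "(u - j1) mod pr m i = (u - j2) mod pr m i"
        using assms(3,5) unfolding S_def by auto
      then show "j1 mod pr m i = j2 mod pr m i" by (rule mod_eq_of_diff_mod_eq)
    qed
  qed
  then show ?thesis using le assms(1) unfolding thetabar_def by linarith
qed

lemma window_on_multiples:
  assumes "i < rho m" and "\<forall>j\<in>{1..kk m}. \<not> pr m i dvd j \<longrightarrow> v j = 0"
  shows "(\<Sum>j=1..kk m. abar m j * v j)
       = (\<Sum>l=1..kk m div pr m i. profile (rho m) l * v (l * pr m i))"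
proof -
  have "(\<Sum>j=1..kk m. abar m j * v j) = (\<Sum>l=1..kk m div pr m i. abar m (l * pr m i) * v (l * pr m i))"
    by (rule sum_over_multiples) (use assms pr_props(1) prime_gt_0_nat in auto)
  also have "\<dots> = (\<Sum>l=1..kk m div pr m i. profile (rho m) l * v (l * pr m i))"
    by (rule sum.cong) (use abar_multiple[OF assms(1)] in auto)
  finally show ?thesis .
qed

subsection \<open>The class indicators and the sequences \<open>x\<close>, \<open>y\<close>, \<open>w\<close>\<close>

definition cls :: "nat \<Rightarrow> nat \<Rightarrow> nat \<Rightarrow> int" where
  "cls m i t = (if t mod pr m i = kk m mod pr m i then 1 else 0)"

definition cls_trunc :: "nat \<Rightarrow> nat \<Rightarrow> nat \<Rightarrow> int" where
  "cls_trunc m i t = (if t + 1 < kk m then cls m i (t + 1) else 0)"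

lemma cls_window:
  assumes "i < rho m"
  shows "int (mu m i) \<le> (\<Sum>q<kk m. cls m i (q + c)) \<and> (\<Sum>q<kk m. cls m i (q + c)) \<le> int (mu m i) + 1"
proof -
  have p: "0 < pr m i" using pr_props(1)[OF assms] prime_gt_0_nat by blast
  then have "kk m mod pr m i < pr m i" by simp
  from residue_count_window[OF p this, of "kk m" c] show ?thesis
    unfolding cls_def mu_def by simp
qed

context
  fixes m :: nat
  assumes rho_ge_2: "2 \<le> rho m"
begin

text \<open>As \<open>rho \<ge> 2\<close> forces \<open>m \<ge> 1\<close>, the order \<open>k\<close> of the recurrence is at least \<open>2\<close>.\<close>
lemma kk_ge_2: "2 \<le> kk m"
proof -
  have "2 * m < pr m 0" using pr_props(2)[of 0 m] rho_ge_2 by simp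
  moreover have "pr m 0 < 3 * m" using pr_props(3)[of 0 m] rho_ge_2 by simp
  ultimately have "1 \<le> 6 * m - 1" by simp
  then have "rho m \<le> (6 * m - 1) * rho m" by simp
  then show ?thesis using rho_ge_2 unfolding kk_def by linarith
qed

text \<open>At a time of the class the window sees every multiple of \<open>p_i\<close>, i.e. the whole
  profile, of weight \<open>theta\<close>; off the class it stays below \<open>theta\<close>.\<close>
lemma cls_solves:
  assumes "i < rho m"
  shows "solves (abar m) (kk m) (thetabar m) (cls m i)"
  unfolding solves_def
proof (intro allI impI)
  fix t assume t: "kk m \<le> t"
  define p where "p = pr m i"
  have p: "0 < p" using pr_props(1)[OF assms] prime_gt_0_nat unfolding p_def by blast
  show "cls m i t = ind ((\<Sum>j=1..kk m. abar m j * cls m i (t - j)) - thetabar m)"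
  proof (cases "t mod p = kk m mod p")
    case True
    have v: "cls m i (t - j) = (if p dvd j then 1 else 0)" if "j \<in> {1..kk m}" for j
      using that t True diff_mod_eq_iff_dvd[of j t p] unfolding cls_def p_def by auto
    have "(\<Sum>j=1..kk m. abar m j * cls m i (t - j))
        = (\<Sum>l=1..kk m div p. profile (rho m) l * cls m i (t - l * p))"
      unfolding p_def by (rule window_on_multiples[OF assms]) (use v in \<open>auto simp: p_def\<close>)
    also have "\<dots> = (\<Sum>l=1..kk m div p. profile (rho m) l)"
      by (rule sum.cong) (use v multiple_in_range[OF p] in auto)
    also have "\<dots> = 2 * int (rho m)"
      by (rule profile_total[OF rho_ge_2]) (use mu_ge[OF assms] in \<open>simp add: mu_def p_def\<close>)
    finally show ?thesis using True unfolding cls_def ind_def thetabar_def p_def by simp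
  next
    case False
    have "(\<Sum>j=1..kk m. abar m j * cls m i (t - j)) < thetabar m"
      by (rule off_class_below_threshold[OF assms _ t]) (use False in \<open>auto simp: cls_def p_def\<close>)
    then show ?thesis using False unfolding cls_def ind_def p_def by simp
  qed
qed

text \<open>At a time \<open>u = t + 1 = k + c*p_i\<close> (\<open>c \<ge> 1\<close>) of the class, the window of the truncated
  indicator misses the first \<open>c\<close> multiples of \<open>p_i\<close>, whose weight is positive, so it
  stays below the threshold.\<close>
lemma cls_trunc_class_time:
  assumes "i < rho m" and "kk m \<le> t" and "(t + 1) mod pr m i = kk m mod pr m i"
  shows "(\<Sum>j=1..kk m. abar m j * cls_trunc m i (t - j)) < thetabar m"
proof -
  define p where "p = pr m i"
  have p: "0 < p" using pr_props(1)[OF assms(1)] prime_gt_0_nat unfolding p_def by blast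
  have "p dvd t + 1 - kk m"
    using assms(2,3) by (subst mod_eq_dvd_iff_nat[symmetric]) (auto simp: p_def)
  then obtain c where c: "t + 1 = kk m + c * p"
    using assms(2) by (metis add.commute dvd_def le_add_diff_inverse mult.commute trans_le_add1)
  have "1 \<le> c" using c assms(2) by (cases c) auto
  have v: "cls_trunc m i (t - j) = (if p dvd j then (if c * p < j then 1 else 0) else 0)"
    if "j \<in> {1..kk m}" for j
  proof -
    have j: "j \<le> t + 1" using that assms(2) by auto
    have "cls_trunc m i (t - j) = (if t + 1 - j < kk m then cls m i (t + 1 - j) else 0)"
      using that assms(2) unfolding cls_trunc_def by (simp add: Suc_diff_le)
    moreover have "t + 1 - j < kk m \<longleftrightarrow> c * p < j" using that c by auto
    moreover have "cls m i (t + 1 - j) = (if p dvd j then 1 else 0)"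
      using assms(3) diff_mod_eq_iff_dvd[OF j, of p] unfolding cls_def p_def by auto
    ultimately show ?thesis by simp
  qed
  have "(\<Sum>j=1..kk m. abar m j * cls_trunc m i (t - j))
      = (\<Sum>l=1..kk m div p. profile (rho m) l * cls_trunc m i (t - l * p))"
    unfolding p_def by (rule window_on_multiples[OF assms(1)]) (use v in \<open>auto simp: p_def\<close>)
  also have "\<dots> = (\<Sum>l=1..kk m div p. if c < l then profile (rho m) l else 0)"
    by (rule sum.cong) (use v multiple_in_range[OF p] p in auto)
  also have "\<dots> = 2 * int (rho m) - (\<Sum>l=1..min c (kk m div p). profile (rho m) l)"
    unfolding sum_drop_prefix
    using profile_total[OF rho_ge_2, of "kk m div p"] mu_ge[OF assms(1)] by (simp add: mu_def p_def)
  also have "\<dots> < thetabar m"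
    using profile_prefix_pos[OF rho_ge_2, of "min c (kk m div p)"] \<open>1 \<le> c\<close>
      mu_ge[OF assms(1)] rho_ge_2 unfolding thetabar_def mu_def p_def by simp
  finally show ?thesis .
qed

text \<open>Off the class the general estimate applies; so the truncated indicator, which
  vanishes from time \<open>k - 1\<close> on, also solves the recurrence.\<close>
lemma cls_trunc_solves:
  assumes "i < rho m"
  shows "solves (abar m) (kk m) (thetabar m) (cls_trunc m i)"
  unfolding solves_def
proof (intro allI impI)
  fix t assume t: "kk m \<le> t"
  have "(\<Sum>j=1..kk m. abar m j * cls_trunc m i (t - j)) < thetabar m"
  proof (cases "(t + 1) mod pr m i = kk m mod pr m i")
    case True
    then show ?thesis by (rule cls_trunc_class_time[OF assms t])
  next
    case False
    show ?thesis
    proof (rule off_class_below_threshold[OF assms False])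
      show "kk m \<le> t + 1" using t by simp
      show "\<forall>j\<in>{1..kk m}. 0 \<le> cls_trunc m i (t - j) \<and> cls_trunc m i (t - j) \<le> 1"
        by (simp add: cls_trunc_def cls_def)
      show "\<forall>j\<in>{1..kk m}. cls_trunc m i (t - j) \<noteq> 0 \<longrightarrow> (t + 1 - j) mod pr m i = kk m mod pr m i"
      proof (intro ballI impI)
        fix j assume j: "j \<in> {1..kk m}" "cls_trunc m i (t - j) \<noteq> 0"
        have "t - j + 1 = t + 1 - j" using j(1) t by (simp add: Suc_diff_le)
        then show "(t + 1 - j) mod pr m i = kk m mod pr m i"
          using j(2) unfolding cls_trunc_def cls_def by (simp split: if_splits)
      qed
    qed
  qed
  moreover have "cls_trunc m i t = 0" using t unfolding cls_trunc_def by simp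
  ultimately show "cls_trunc m i t = ind ((\<Sum>j=1..kk m. abar m j * cls_trunc m i (t - j)) - thetabar m)"
    unfolding ind_def by simp
qed

text \<open>\<open>x^{alpha_i}\<close> starts with the points \<open>beta_i + l*p_i\<close>, \<open>l < mu_i\<close>, which are exactly
  the times below \<open>k\<close> in the class of \<open>k\<close>; hence it is the class indicator.\<close>
lemma xa_eq_cls:
  assumes "i < rho m"
  shows "xa m i t = cls m i t"
  unfolding xa_def
proof (rule thr_eq_solution[OF cls_solves[OF assms]], intro allI impI)
  fix t assume t: "t < kk m"
  define p where "p = pr m i"
  have "(\<exists>l. l < mu m i \<and> t = beta m i + l * p) \<longleftrightarrow> t mod p = kk m mod p"
  proof
    assume "\<exists>l. l < mu m i \<and> t = beta m i + l * p"
    then show "t mod p = kk m mod p" unfolding beta_eq_mod p_def by auto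
  next
    assume h: "t mod p = kk m mod p"
    have te: "t = kk m mod p + (t div p) * p" using h div_mult_mod_eq[of t p] by simp
    have "t div p < kk m div p"
    proof (rule ccontr)
      assume "\<not> t div p < kk m div p"
      then have "(kk m div p) * p \<le> (t div p) * p" by simp
      then show False using te t div_mult_mod_eq[of "kk m" p] by linarith
    qed
    then show "\<exists>l. l < mu m i \<and> t = beta m i + l * p"
      using te unfolding beta_eq_mod mu_def p_def by auto
  qed
  then show "x_init m i t = cls m i t" unfolding x_init_def cls_def p_def by simp
qed

lemma yy_component:
  assumes "i < rho m"
  shows "yy m (rho m * j + i) = cls m i (j + 1)"
  unfolding yy_def
proof (rule interleaved_component[OF assms solves_shift[OF cls_solves[OF assms]]])
  fix t
  show "y_init m (rho m * t + i) = cls m i (t + 1)"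
    unfolding y_init_def using assms by (simp add: xa_eq_cls)
qed

text \<open>Components \<open>i \<le> d\<close> of \<open>w\<close>: the truncated class indicators (the last initial value is flipped).\<close>
lemma ww_component_low:
  assumes "i < rho m" and "i \<le> d"
  shows "ww m d (rho m * j + i) = cls_trunc m i j"
  unfolding ww_def
proof (rule interleaved_component[OF assms(1) cls_trunc_solves[OF assms(1)]])
  fix t assume t: "t < kk m"
  show "w_init m d (rho m * t + i) = cls_trunc m i t"
    unfolding w_init_def Let_def cls_trunc_def
    using assms t kk_ge_2 by (auto simp: xa_eq_cls cls_def add.commute)
qed

lemma ww_component_high:
  assumes "i < rho m" and "d < i"
  shows "ww m d (rho m * j + i) = cls m i (j + (Lcm (pr m ` {0..d}) + 1))"
  unfolding ww_def
proof (rule interleaved_component[OF assms(1) solves_shift[OF cls_solves[OF assms(1)]]])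
  fix t
  have "w_init m d (rho m * t + i) = yy m (rho m * t + i + L1 m d)"
    unfolding w_init_def Let_def using assms by simp
  also have "rho m * t + i + L1 m d = rho m * (t + Lcm (pr m ` {0..d})) + i"
    unfolding L1_def by (simp add: algebra_simps)
  also have "yy m \<dots> = cls m i (t + (Lcm (pr m ` {0..d}) + 1))"
    unfolding yy_component[OF assms(1)] by (simp add: ac_simps)
  finally show "w_init m d (rho m * t + i) = cls m i (t + (Lcm (pr m ` {0..d}) + 1))" .
qed

text \<open>The truncated indicator has its ones at the class times \<open>< k - 1\<close>, one fewer than
  the \<open>\<le> mu_i + 1\<close> class times in \<open>1..k\<close>; so every window contains at most \<open>mu_i\<close> of them.\<close>
lemma cls_trunc_window:
  assumes "i < rho m"
  shows "0 \<le> (\<Sum>q<kk m. cls_trunc m i (q + c)) \<and> (\<Sum>q<kk m. cls_trunc m i (q + c)) \<le> int (mu m i)"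
proof -
  define K where "K = kk m"
  have nonneg: "0 \<le> cls_trunc m i x" for x by (simp add: cls_trunc_def cls_def)
  have "(\<Sum>q<K. cls_trunc m i (q + c)) = (\<Sum>x\<in>{0 + c..<K + c}. cls_trunc m i x)"
    using sum.shift_bounds_nat_ivl[of "cls_trunc m i" 0 c K] by (simp add: atLeast0LessThan)
  also have "\<dots> \<le> (\<Sum>x<K + c. cls_trunc m i x)" by (rule sum_mono2) (auto simp: nonneg)
  also have "\<dots> = (\<Sum>x<K - 1. cls_trunc m i x)"
    by (rule sum.mono_neutral_right) (auto simp: cls_trunc_def K_def)
  also have "\<dots> = (\<Sum>x<K - 1. cls m i (x + 1))"
    by (rule sum.cong) (auto simp: cls_trunc_def K_def)
  finally have upper: "(\<Sum>q<K. cls_trunc m i (q + c)) \<le> (\<Sum>x<K - 1. cls m i (x + 1))" .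
  obtain K' where K': "K = Suc K'" using kk_ge_2 unfolding K_def by (cases "kk m") auto
  then have "(\<Sum>x<K. cls m i (x + 1)) = (\<Sum>x<K - 1. cls m i (x + 1)) + 1"
    unfolding cls_def K_def by simp
  moreover have "(\<Sum>x<K. cls m i (x + 1)) \<le> int (mu m i) + 1"
    using cls_window[OF assms, of 1] unfolding K_def by simp
  moreover have "0 \<le> (\<Sum>q<K. cls_trunc m i (q + c))" by (rule sum_nonneg) (simp add: nonneg)
  ultimately show ?thesis using upper unfolding K_def by linarith
qed

text \<open>Windows of \<open>y\<close>: each of the \<open>rho\<close> components contributes \<open>mu_i\<close> or \<open>mu_i + 1\<close>.\<close>
lemma yy_window:
  assumes "hh m \<le> n"
  shows "(\<Sum>i<rho m. int (mu m i)) \<le> (\<Sum>f=1..hh m. yy m (n - f))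
       \<and> (\<Sum>f=1..hh m. yy m (n - f)) \<le> int (rho m) + (\<Sum>i<rho m. int (mu m i))"
proof -
  have "(\<Sum>i<rho m. int (mu m i)) \<le> (\<Sum>x<rho m * kk m. yy m (n - hh m + x))
      \<and> (\<Sum>x<rho m * kk m. yy m (n - hh m + x)) \<le> (\<Sum>i<rho m. int (mu m i) + 1)"
  proof (rule interleaved_window_bounds)
    fix i c assume i: "i < rho m"
    have "(\<Sum>q<kk m. yy m (rho m * (q + c) + i)) = (\<Sum>q<kk m. cls m i (q + (c + 1)))"
      by (simp add: yy_component[OF i] add.assoc)
    then show "int (mu m i) \<le> (\<Sum>q<kk m. yy m (rho m * (q + c) + i))
        \<and> (\<Sum>q<kk m. yy m (rho m * (q + c) + i)) \<le> int (mu m i) + 1"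
      using cls_window[OF i, of "c + 1"] by simp
  qed (use rho_ge_2 in simp)
  then show ?thesis
    unfolding window_before[OF assms, of "yy m"] by (simp add: hh_def sum.distrib)
qed

text \<open>For \<open>w\<close> the components \<open>i \<le> d\<close> are truncated, contributing between \<open>0\<close> and \<open>mu_i\<close>.\<close>
lemma ww_window:
  assumes "hh m \<le> n" and "d \<le> rho m - 1"
  shows "(\<Sum>i=d+1..rho m - 1. int (mu m i)) \<le> (\<Sum>f=1..hh m. ww m d (n - f))
       \<and> (\<Sum>f=1..hh m. ww m d (n - f)) \<le> int (rho m) - int d - 1 + (\<Sum>i<rho m. int (mu m i))"
proof -
  define lo where "lo i = (if d < i then int (mu m i) else 0)" for i
  define hi where "hi i = (if d < i then int (mu m i) + 1 else int (mu m i))" for i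
  have above_d: "{..<rho m} \<inter> {i. d < i} = {d+1..rho m - 1}" using rho_ge_2 by auto
  have "(\<Sum>i<rho m. lo i) \<le> (\<Sum>x<rho m * kk m. ww m d (n - hh m + x))
      \<and> (\<Sum>x<rho m * kk m. ww m d (n - hh m + x)) \<le> (\<Sum>i<rho m. hi i)"
  proof (rule interleaved_window_bounds)
    fix i c assume i: "i < rho m"
    show "lo i \<le> (\<Sum>q<kk m. ww m d (rho m * (q + c) + i))
        \<and> (\<Sum>q<kk m. ww m d (rho m * (q + c) + i)) \<le> hi i"
    proof (cases "d < i")
      case True
      then show ?thesis using cls_window[OF i, of "c + (Lcm (pr m ` {0..d}) + 1)"]
        by (simp add: ww_component_high[OF i True] lo_def hi_def add.assoc)
    next
      case False
      then show ?thesis using cls_trunc_window[OF i, of c]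
        by (simp add: ww_component_low[OF i] lo_def hi_def)
    qed
  qed (use rho_ge_2 in simp)
  moreover have "(\<Sum>i<rho m. lo i) = (\<Sum>i=d+1..rho m - 1. int (mu m i))"
    unfolding lo_def by (simp add: sum.If_cases above_d)
  moreover have "(\<Sum>i<rho m. hi i) = (\<Sum>i<rho m. int (mu m i) + (if d < i then 1 else 0))"
    by (rule sum.cong) (simp_all add: hi_def)
  then have "(\<Sum>i<rho m. hi i) = (\<Sum>i<rho m. int (mu m i)) + int (card {d+1..rho m - 1})"
    by (simp add: sum.distrib sum.If_cases above_d)
  moreover have "int (card {d+1..rho m - 1}) = int (rho m) - int d - 1" using assms(2) rho_ge_2 by simp
  ultimately show ?thesis
    unfolding window_before[OF assms(1), of "ww m d"] by (simp add: hh_def)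
qed

end

theorem lemma14:
  fixes m n d :: nat
  assumes "m \<ge> 1" and "rho m \<ge> 2"
    and "n \<ge> hh m" and "d \<le> rho m - 1"
  shows "(\<Sum>i<rho m. int (mu m i)) \<le> (\<Sum>f=1..hh m. yy m (n - f))
         \<and> (\<Sum>f=1..hh m. yy m (n - f)) \<le> int (rho m) + (\<Sum>i<rho m. int (mu m i))
         \<and> (\<Sum>i=d+1..rho m - 1. int (mu m i)) \<le> (\<Sum>f=1..hh m. ww m d (n - f))
         \<and> (\<Sum>f=1..hh m. ww m d (n - f))
              \<le> int (rho m) - int d - 1 + (\<Sum>i<rho m. int (mu m i))"
  using yy_window[OF assms(2,3)] ww_window[OF assms(2,3,4)] by blast

end
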